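(* The map $\pi^{Syz}_p$ is surjective for all $p\ge 2$ if and only if, for all $p\ge 2$, $\partial_K(R_{\ge p})=M\cap I_F^p$; and in that case $I_K^p\cong I_F^p/\partial_K(R_{\ge p})$ for all $p\ge 2$.
   Context: Let $K$ be an augmented unital $\mathbb{Q}$-algebra generated by a set $X$, $F$ the free unital $\mathbb{Q}$-algebra on $X$, and $I_F\subseteq F$, $I_K\subseteq K$ the kernels of the algebra maps sending each $x\in X$ to $1$. Let $\tilde X=\mathbb{Q}\{x-1:x\in X\}$, so $F=T\tilde X=\bigoplus_{p}\tilde X^p$ ($\tilde X^p$ spanned by $p$-fold products) and $I_F^p=\bigoplus_{q\ge p}\tilde X^q$. Let $M\subseteq I_F$ be a two-sided ideal with $K=F/M$, so $I_K=I_F/M$. $K$ and $F$ are replaced throughout by their completions with respect to the filtrations by powers of their augmentation ideals, and it is assumed that $M\subseteq I_F^2$. Let $\{y_q:q\in Q\}\subseteq I_F^2$ generate $M$ as a two-sided ideal, let $Y_F=\{Y_q\}$ be symbols in bijection with them, let $R$ be the free two-sided $F$-module on $Y_F$, and $\partial_K:R\to F$ the bimodule map $Y_q\mapsto y_q$. Grade $R$ by $R_p=\sum_{q=0}^{p-2}\tilde X^q\cdot\mathbb{Q}Y_F\cdot\tilde X^{p-q-2}$ and set $R_{\ge p}=\bigoplus_{q\ge p}R_q$, so $\partial_K(R_{\ge p})\subseteq M\cap I_F^p$. Let $\pi^0_p:I_F^p\to\tilde X^p$ and $\pi^1_p:R_{\ge p}\to R_p$ be the projections onto the degree-$p$ components,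 and $\partial_A:R_p\to\tilde X^p$, $\partial_A=\pi^0_p\circ\partial_K$. Define $\pi^{Syz}_p:\ker(\partial_K|_{R_{\ge p}})\to\ker(\partial_A|_{R_p})$ as the map induced by $\pi^1_p$. *)

theory Defs
  imports Complex_Main
begin

text \<open>Completed free unital Q-algebra on the generating set (the type 'x), in the
  basis of words in the elements x-1: a word u = [x1,...,xn] stands for the monomial
  (x1-1)...(xn-1) in tilde-X^n. The completion with respect to the I_F-adic filtration
  is the product over p of the components tilde-X^p, i.e. series whose coefficients on
  words of each fixed length are finitely supported.\<close>

type_synonym 'x ser = "'x list \<Rightarrow> rat"

definition Fc :: "'x ser set" where
  "Fc = {f. \<forall>n. finite {w. length w = n \<and> f w \<noteq> 0}}"

definition fmult :: "'x ser \<Rightarrow> 'x ser \<Rightarrow> 'x ser" where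
  "fmult f g = (\<lambda>w. \<Sum>i\<in>{0..length w}. f (take i w) * g (drop i w))"

definition mono :: "'x list \<Rightarrow> 'x ser" where
  "mono u = (\<lambda>w. if w = u then 1 else 0)"

definition IF :: "nat \<Rightarrow> 'x ser set" where
  "IF p = {f \<in> Fc. \<forall>w. length w < p \<longrightarrow> f w = 0}"

definition pi0 :: "nat \<Rightarrow> 'x ser \<Rightarrow> 'x ser" where
  "pi0 p f = (\<lambda>w. if length w = p then f w else 0)"

text \<open>Completed free F-bimodule R on symbols Y_q: the basis element (u,q,v) stands for
  u * Y_q * v and has degree |u| + |v| + 2.\<close>

type_synonym ('x,'q) rser = "'x list \<times> 'q \<times> 'x list \<Rightarrow> rat"

fun rdeg :: "'x list \<times> 'q \<times> 'x list \<Rightarrow> nat" where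
  "rdeg (u, q, v) = length u + length v + 2"

definition Rc :: "('x,'q) rser set" where
  "Rc = {r. \<forall>n. finite {t. rdeg t = n \<and> r t \<noteq> 0}}"

definition Rge :: "nat \<Rightarrow> ('x,'q) rser set" where
  "Rge p = {r \<in> Rc. \<forall>t. rdeg t < p \<longrightarrow> r t = 0}"

definition Rdeg :: "nat \<Rightarrow> ('x,'q) rser set" where
  "Rdeg p = {r \<in> Rc. \<forall>t. rdeg t \<noteq> p \<longrightarrow> r t = 0}"

definition pi1 :: "nat \<Rightarrow> ('x,'q) rser \<Rightarrow> ('x,'q) rser" where
  "pi1 p r = (\<lambda>t. if rdeg t = p then r t else 0)"

text \<open>Since y_q lies in I_F^2, only the
  finitely many basis elements of degree <= |w| contribute to the coefficient of w.\<close>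
definition dK :: "('q \<Rightarrow> 'x ser) \<Rightarrow> ('x,'q) rser \<Rightarrow> 'x ser" where
  "dK y r = (\<lambda>w. \<Sum>t\<in>{t. rdeg t \<le> length w \<and> r t \<noteq> 0}.
      (case t of (u, q, v) \<Rightarrow> r t * fmult (fmult (mono u) (y q)) (mono v) w))"

definition dA :: "('q \<Rightarrow> 'x ser) \<Rightarrow> nat \<Rightarrow> ('x,'q) rser \<Rightarrow> 'x ser" where
  "dA y p r = pi0 p (dK y r)"

text \<open>M = partial_K(R), the (closed) two-sided ideal generated by the y_q.\<close>
definition Mid :: "('q \<Rightarrow> 'x ser) \<Rightarrow> 'x ser set" where
  "Mid y = dK y ` Rc"

definition SyzK :: "('q \<Rightarrow> 'x ser) \<Rightarrow> nat \<Rightarrow> ('x,'q) rser set" where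
  "SyzK y p = {r \<in> Rge p. dK y r = (\<lambda>_. 0)}"

definition SyzA :: "('q \<Rightarrow> 'x ser) \<Rightarrow> nat \<Rightarrow> ('x,'q) rser set" where
  "SyzA y p = {s \<in> Rdeg p. dA y p s = (\<lambda>_. 0)}"

definition piSyz_surj :: "('q \<Rightarrow> 'x ser) \<Rightarrow> nat \<Rightarrow> bool" where
  "piSyz_surj y p \<longleftrightarrow> pi1 p ` SyzK y p = SyzA y p"

definition Kcls :: "('q \<Rightarrow> 'x ser) \<Rightarrow> 'x ser \<Rightarrow> 'x ser set" where
  "Kcls y f = {g \<in> Fc. (\<lambda>w. g w - f w) \<in> Mid y}"

definition IK :: "('q \<Rightarrow> 'x ser) \<Rightarrow> nat \<Rightarrow> 'x ser set set" where
  "IK y p = Kcls y ` IF p"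

definition Dcls :: "('q \<Rightarrow> 'x ser) \<Rightarrow> nat \<Rightarrow> 'x ser \<Rightarrow> 'x ser set" where
  "Dcls y p f = {g \<in> IF p. (\<lambda>w. g w - f w) \<in> dK y ` Rge p}"

definition IFquot :: "('q \<Rightarrow> 'x ser) \<Rightarrow> nat \<Rightarrow> 'x ser set set" where
  "IFquot y p = Dcls y p ` IF p"

end

theory Submission
  imports Defs "HOL-Library.Function_Algebras"
begin

text \<open>Surjectivity of \<open>\<pi>\<^sup>S\<^sup>y\<^sup>z\<^sub>p\<close> raises the filtration degree of a preimage
  by one: if \<open>r \<in> R\<^sub>\<ge>\<^sub>p\<close> and \<open>\<partial>\<^sub>K r \<in> I\<^sub>F\<^sup>p\<^sup>+\<^sup>1\<close>, then \<open>\<pi>\<^sup>1\<^sub>p r\<close> is a syzygy of \<open>\<partial>\<^sub>A\<close>; lifting it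
  to a syzygy \<open>z\<close> of \<open>\<partial>\<^sub>K\<close> gives \<open>r - z \<in> R\<^sub>\<ge>\<^sub>p\<^sub>+\<^sub>1\<close> with the same image. Starting from
  \<open>R = R\<^sub>\<ge>\<^sub>2\<close> this shows \<open>M \<inter> I\<^sub>F\<^sup>p = \<partial>\<^sub>K(R\<^sub>\<ge>\<^sub>p)\<close>. Conversely, a syzygy \<open>s \<in> R\<^sub>p\<close> of \<open>\<partial>\<^sub>A\<close>
  has \<open>\<partial>\<^sub>K s \<in> M \<inter> I\<^sub>F\<^sup>p\<^sup>+\<^sup>1 = \<partial>\<^sub>K(R\<^sub>\<ge>\<^sub>p\<^sub>+\<^sub>1)\<close>, say \<open>\<partial>\<^sub>K s = \<partial>\<^sub>K r'\<close>, and \<open>s - r'\<close> is a syzygy of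
  \<open>\<partial>\<^sub>K\<close> lying over \<open>s\<close>. Once \<open>\<partial>\<^sub>K(R\<^sub>\<ge>\<^sub>p) = M \<inter> I\<^sub>F\<^sup>p\<close>, the map \<open>f \<mapsto> f + M\<close> is
  well defined and injective on \<open>I\<^sub>F\<^sup>p / \<partial>\<^sub>K(R\<^sub>\<ge>\<^sub>p)\<close>.\<close>

lemma finite_nonzero_diff:
  fixes f g :: "'a \<Rightarrow> 'b::ab_group_add"
  assumes "finite {x. P x \<and> f x \<noteq> 0}" "finite {x. P x \<and> g x \<noteq> 0}"
  shows "finite {x. P x \<and> (f - g) x \<noteq> 0}"
  by (rule finite_subset[OF _ finite_UnI[OF assms]]) auto

lemma rdeg_ge_2: "2 \<le> rdeg t"
  by (cases t) auto

text \<open>Unfolding \<open>rdeg\<close> would make the simplifier split every quantifier over basis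
  elements into three; only the bound \<open>2 \<le> rdeg t\<close> is needed from now on.\<close>

declare rdeg.simps [simp del]

lemma zero_in_Rge: "0 \<in> Rge p"
  unfolding Rge_def Rc_def by simp

lemma diff_in_Rc: "r \<in> Rc \<Longrightarrow> s \<in> Rc \<Longrightarrow> r - s \<in> Rc"
  unfolding Rc_def mem_Collect_eq by (intro allI finite_nonzero_diff) auto

lemma diff_in_Rge: "r \<in> Rge p \<Longrightarrow> s \<in> Rge p \<Longrightarrow> r - s \<in> Rge p"
  unfolding Rge_def by (simp add: diff_in_Rc)

lemma Rge_subset_Rc: "Rge p \<subseteq> Rc"
  unfolding Rge_def by blast

lemma Rge_eq_Rc:
  assumes "p \<le> 2" shows "Rge p = Rc"
proof -
  have "\<not> rdeg t < p" for t
    using rdeg_ge_2[of t] assms by linarith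
  then show ?thesis
    unfolding Rge_def by blast
qed

lemma Rge_Suc_subset: "Rge (Suc p) \<subseteq> Rge p"
  unfolding Rge_def by auto

lemma Rdeg_subset_Rge: "Rdeg p \<subseteq> Rge p"
  unfolding Rdeg_def Rge_def by auto

lemma pi1_in_Rdeg:
  assumes "r \<in> Rc" shows "pi1 p r \<in> Rdeg p"
proof -
  have "{t. rdeg t = n \<and> pi1 p r t \<noteq> 0} \<subseteq> {t. rdeg t = n \<and> r t \<noteq> 0}" for n
    unfolding pi1_def by auto
  then have "finite {t. rdeg t = n \<and> pi1 p r t \<noteq> 0}" for n
    using assms finite_subset unfolding Rc_def by blast
  then show ?thesis
    unfolding Rdeg_def Rc_def pi1_def by simp
qed

lemma diff_in_Rge_Suc:
  assumes "r \<in> Rge p" "s \<in> Rge p" "pi1 p r = pi1 p s"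
  shows "r - s \<in> Rge (Suc p)"
proof -
  have "r t = s t" if "rdeg t < Suc p" for t
  proof (cases "rdeg t = p")
    case True
    then show ?thesis using fun_cong[OF assms(3), of t] by (simp add: pi1_def)
  next
    case False
    with that have "rdeg t < p"
      by simp
    then have "r t = 0" "s t = 0"
      using assms(1,2) unfolding Rge_def by blast+
    then show ?thesis
      by simp
  qed
  then have "\<forall>t. rdeg t < Suc p \<longrightarrow> (r - s) t = 0"
    by simp
  moreover have "r - s \<in> Rc"
    using diff_in_Rc assms(1,2) Rge_subset_Rc by blast
  ultimately show ?thesis
    unfolding Rge_def by blast
qed

lemma diff_pi1_in_Rge_Suc:
  assumes "r \<in> Rge p" shows "r - pi1 p r \<in> Rge (Suc p)"
proof (rule diff_in_Rge_Suc[OF assms])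
  show "pi1 p r \<in> Rge p"
    using assms pi1_in_Rdeg Rdeg_subset_Rge Rge_subset_Rc by blast
  show "pi1 p r = pi1 p (pi1 p r)"
    by (simp add: pi1_def fun_eq_iff)
qed

subsection \<open>The boundary map \<open>\<partial>\<^sub>K\<close>\<close>

definition dK_basis :: "('q \<Rightarrow> 'x ser) \<Rightarrow> 'x list \<times> 'q \<times> 'x list \<Rightarrow> 'x ser" where
  "dK_basis y t = (case t of (u, q, v) \<Rightarrow> fmult (fmult (mono u) (y q)) (mono v))"

lemma finite_support_rdeg_le:
  assumes "r \<in> Rc" shows "finite {t. rdeg t \<le> n \<and> r t \<noteq> 0}"
proof -
  have "{t. rdeg t \<le> n \<and> r t \<noteq> 0} = (\<Union>k\<le>n. {t. rdeg t = k \<and> r t \<noteq> 0})"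
    by auto
  then show ?thesis
    using assms unfolding Rc_def by auto
qed

lemma dK_eq_sum:
  assumes "finite A" "{t. rdeg t \<le> length w \<and> r t \<noteq> 0} \<subseteq> A" "A \<subseteq> {t. rdeg t \<le> length w}"
  shows "dK y r w = (\<Sum>t\<in>A. r t * dK_basis y t w)"
proof -
  have "dK y r w = (\<Sum>t\<in>{t. rdeg t \<le> length w \<and> r t \<noteq> 0}. r t * dK_basis y t w)"
    unfolding dK_def dK_basis_def by (rule sum.cong) (auto split: prod.splits)
  also have "\<dots> = (\<Sum>t\<in>A. r t * dK_basis y t w)"
    by (rule sum.mono_neutral_left) (use assms in auto)
  finally show ?thesis .
qed

lemma dK_zero: "dK y 0 = 0"
  unfolding dK_def zero_fun_def by simp

lemma dK_diff:
  fixes y :: "'q \<Rightarrow> 'x ser"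
  assumes "r \<in> Rc" "s \<in> Rc"
  shows "dK y (r - s) = dK y r - dK y s"
proof
  fix w :: "'x list"
  let ?A = "{t. rdeg t \<le> length w \<and> r t \<noteq> 0} \<union> {t. rdeg t \<le> length w \<and> s t \<noteq> 0}"
  have A: "finite ?A"
    using finite_support_rdeg_le assms by blast
  have A_le: "?A \<subseteq> {t. rdeg t \<le> length w}"
    by blast
  have r_sum: "dK y r w = (\<Sum>t\<in>?A. r t * dK_basis y t w)"
    by (rule dK_eq_sum[OF A _ A_le]) blast
  have s_sum: "dK y s w = (\<Sum>t\<in>?A. s t * dK_basis y t w)"
    by (rule dK_eq_sum[OF A _ A_le]) blast
  have "dK y (r - s) w = (\<Sum>t\<in>?A. (r - s) t * dK_basis y t w)"
    by (rule dK_eq_sum[OF A _ A_le]) (simp add: subset_iff)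
  also have "\<dots> = (\<Sum>t\<in>?A. r t * dK_basis y t w) - (\<Sum>t\<in>?A. s t * dK_basis y t w)"
    unfolding minus_apply left_diff_distrib by (rule sum_subtractf)
  also have "\<dots> = (dK y r - dK y s) w"
    by (simp only: minus_apply r_sum s_sum)
  finally show "dK y (r - s) w = (dK y r - dK y s) w" .
qed

lemma dK_vanishes_below:
  assumes "r \<in> Rge p" "length w < p"
  shows "dK y r w = 0"
proof -
  have "\<forall>t. rdeg t < p \<longrightarrow> r t = 0"
    using assms(1) unfolding Rge_def by blast
  then have no_terms: "{t. rdeg t \<le> length w \<and> r t \<noteq> 0} = {}"
    using assms(2) le_less_trans by blast
  show ?thesis
    unfolding dK_def no_terms by simp
qed

lemma dK_pi1_top_degree:
  assumes "r \<in> Rge p" "length w = p"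
  shows "dK y (pi1 p r) w = dK y r w"
proof -
  have r: "r \<in> Rc"
    using assms(1) Rge_subset_Rc by blast
  then have "pi1 p r \<in> Rc"
    using pi1_in_Rdeg Rdeg_subset_Rge Rge_subset_Rc by blast
  with r have "dK y r w - dK y (pi1 p r) w = dK y (r - pi1 p r) w"
    by (simp add: dK_diff)
  also have "\<dots> = 0"
    using dK_vanishes_below[OF diff_pi1_in_Rge_Suc[OF assms(1)]] assms(2) by simp
  finally show ?thesis
    by simp
qed

lemma diff_in_Fc: "f \<in> Fc \<Longrightarrow> g \<in> Fc \<Longrightarrow> f - g \<in> Fc"
  unfolding Fc_def mem_Collect_eq by (intro allI finite_nonzero_diff) auto

lemma diff_in_IF: "f \<in> IF p \<Longrightarrow> g \<in> IF p \<Longrightarrow> f - g \<in> IF p"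
  unfolding IF_def by (simp add: diff_in_Fc)

lemma IF_Suc_subset: "IF (Suc p) \<subseteq> IF p"
  unfolding IF_def by auto

lemma mono_in_Fc: "mono u \<in> Fc"
  unfolding Fc_def mono_def by (auto intro: rev_finite_subset[of "{u}"])

lemma fmult_in_Fc:
  assumes "f \<in> Fc" "g \<in> Fc"
  shows "fmult f g \<in> Fc"
  unfolding Fc_def mem_Collect_eq
proof
  fix n
  let ?pairs = "\<Union>i\<le>n. {a. length a = i \<and> f a \<noteq> 0} \<times> {b. length b = n - i \<and> g b \<noteq> 0}"
  have "{w. length w = n \<and> fmult f g w \<noteq> 0} \<subseteq> (\<lambda>(a, b). a @ b) ` ?pairs"
  proof
    fix w assume "w \<in> {w. length w = n \<and> fmult f g w \<noteq> 0}"
    then have n: "length w = n" and "(\<Sum>i\<in>{0..length w}. f (take i w) * g (drop i w)) \<noteq> 0"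
      unfolding fmult_def by auto
    then obtain i where "i \<le> length w" "f (take i w) * g (drop i w) \<noteq> 0"
      by (meson atLeastAtMost_iff sum.neutral)
    with n show "w \<in> (\<lambda>(a, b). a @ b) ` ?pairs"
      by (intro image_eqI[of _ _ "(take i w, drop i w)"]) auto
  qed
  moreover have "finite ?pairs"
    using assms unfolding Fc_def by auto
  ultimately show "finite {w. length w = n \<and> fmult f g w \<noteq> 0}"
    by (meson finite_imageI rev_finite_subset)
qed

lemma dK_in_Fc:
  assumes y: "\<forall>q. y q \<in> Fc" and r: "r \<in> Rc"
  shows "dK y r \<in> Fc"
  unfolding Fc_def mem_Collect_eq
proof
  fix n
  let ?T = "{t. rdeg t \<le> n \<and> r t \<noteq> 0}"
  have "{w. length w = n \<and> dK y r w \<noteq> 0} \<subseteq> (\<Union>t\<in>?T. {w. length w = n \<and> dK_basis y t w \<noteq> 0})"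
  proof
    fix w assume w: "w \<in> {w. length w = n \<and> dK y r w \<noteq> 0}"
    then have n: "length w = n"
      by simp
    have "dK y r w = (\<Sum>t\<in>?T. r t * dK_basis y t w)"
      by (rule dK_eq_sum) (use finite_support_rdeg_le[OF r] n in blast)+
    with w have "(\<Sum>t\<in>?T. r t * dK_basis y t w) \<noteq> 0"
      by simp
    then obtain t where t: "t \<in> ?T" and "r t * dK_basis y t w \<noteq> 0"
      by (meson sum.neutral)
    with n show "w \<in> (\<Union>t\<in>?T. {w. length w = n \<and> dK_basis y t w \<noteq> 0})"
      by (intro UN_I[OF t]) simp
  qed
  moreover have "finite (\<Union>t\<in>?T. {w. length w = n \<and> dK_basis y t w \<noteq> 0})"
  proof (rule finite_UN_I[OF finite_support_rdeg_le[OF r]])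
    fix t
    have "dK_basis y t \<in> Fc"
      using y by (simp add: dK_basis_def fmult_in_Fc mono_in_Fc split: prod.split)
    then show "finite {w. length w = n \<and> dK_basis y t w \<noteq> 0}"
      unfolding Fc_def by blast
  qed
  ultimately show "finite {w. length w = n \<and> dK y r w \<noteq> 0}"
    by (rule finite_subset)
qed

lemma dK_in_IF:
  assumes "\<forall>q. y q \<in> Fc" "r \<in> Rge p"
  shows "dK y r \<in> IF p"
proof -
  have "dK y r \<in> Fc"
    using dK_in_Fc[OF assms(1)] assms(2) Rge_subset_Rc by blast
  then show ?thesis
    unfolding IF_def using dK_vanishes_below[OF assms(2)] by simp
qed

lemma dK_Rge_subset:
  assumes "\<forall>q. y q \<in> Fc"
  shows "dK y ` Rge p \<subseteq> Mid y \<inter> IF p"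
proof
  fix m assume "m \<in> dK y ` Rge p"
  then obtain r where r: "r \<in> Rge p" and m: "m = dK y r"
    by blast
  have "m \<in> Mid y"
    unfolding Mid_def m using r Rge_subset_Rc by blast
  then show "m \<in> Mid y \<inter> IF p"
    unfolding m using dK_in_IF[OF assms r] by blast
qed

subsection \<open>Lifting syzygies versus raising the filtration degree\<close>

lemma pi1_in_SyzA_iff:
  assumes y: "\<forall>q. y q \<in> Fc" and r: "r \<in> Rge p"
  shows "pi1 p r \<in> SyzA y p \<longleftrightarrow> dK y r \<in> IF (Suc p)"
proof -
  have "pi1 p r \<in> Rdeg p"
    using r Rge_subset_Rc pi1_in_Rdeg by blast
  then have "pi1 p r \<in> SyzA y p \<longleftrightarrow> (\<forall>w. length w = p \<longrightarrow> dK y r w = 0)"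
    unfolding SyzA_def dA_def pi0_def by (simp add: fun_eq_iff dK_pi1_top_degree[OF r])
  also have "\<dots> \<longleftrightarrow> (\<forall>w. length w < Suc p \<longrightarrow> dK y r w = 0)"
    using dK_vanishes_below[OF r] by (auto simp: less_Suc_eq)
  also have "\<dots> \<longleftrightarrow> dK y r \<in> IF (Suc p)"
    using dK_in_IF[OF y r] unfolding IF_def by blast
  finally show ?thesis .
qed

lemma dK_image_Rge_Suc_if_piSyz_surj:
  assumes y: "\<forall>q. y q \<in> Fc" and surj: "piSyz_surj y p"
    and r: "r \<in> Rge p" and top: "dK y r \<in> IF (Suc p)"
  shows "dK y r \<in> dK y ` Rge (Suc p)"
proof -
  have "pi1 p r \<in> SyzA y p"
    using pi1_in_SyzA_iff[OF y r] top by blast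
  then obtain z where z: "z \<in> Rge p" "dK y z = 0" "pi1 p z = pi1 p r"
    using surj unfolding piSyz_surj_def SyzK_def zero_fun_def by force
  have "r - z \<in> Rge (Suc p)"
    using diff_in_Rge_Suc[OF r z(1)] z(3) by simp
  have "r \<in> Rc" "z \<in> Rc"
    using r z(1) Rge_subset_Rc by blast+
  then have "dK y r = dK y (r - z)"
    using z(2) by (simp add: dK_diff)
  then show ?thesis
    using \<open>r - z \<in> Rge (Suc p)\<close> by (rule image_eqI)
qed

lemma Mid_IF_subset_if_piSyz_surj:
  assumes y: "\<forall>q. y q \<in> Fc" and surj: "\<forall>k<p. 2 \<le> k \<longrightarrow> piSyz_surj y k"
  shows "Mid y \<inter> IF p \<subseteq> dK y ` Rge p"
  using surj
proof (induction p)
  case 0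
  then show ?case
    by (simp add: Mid_def Rge_eq_Rc)
next
  case (Suc p)
  show ?case
  proof
    fix m assume m: "m \<in> Mid y \<inter> IF (Suc p)"
    show "m \<in> dK y ` Rge (Suc p)"
    proof (cases "p < 2")
      case True
      then show ?thesis
        using m by (simp add: Mid_def Rge_eq_Rc)
    next
      case False
      have "Mid y \<inter> IF p \<subseteq> dK y ` Rge p"
        using Suc.IH Suc.prems by simp
      moreover have "m \<in> Mid y \<inter> IF p"
        using m IF_Suc_subset by blast
      ultimately obtain r where r: "r \<in> Rge p" and "m = dK y r"
        by blast
      moreover have "piSyz_surj y p"
        using Suc.prems False by simp
      ultimately show ?thesis
        using dK_image_Rge_Suc_if_piSyz_surj[OF y _ r] m by blast
    qed
  qed
qed

lemma pi1_SyzK_subset_SyzA: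
  assumes y: "\<forall>q. y q \<in> Fc"
  shows "pi1 p ` SyzK y p \<subseteq> SyzA y p"
proof
  fix s assume "s \<in> pi1 p ` SyzK y p"
  then obtain r where r: "r \<in> Rge p" "dK y r = 0" and s: "s = pi1 p r"
    unfolding SyzK_def zero_fun_def by blast
  have "dK y r \<in> IF (Suc p)"
    using r(2) unfolding IF_def Fc_def by simp
  then show "s \<in> SyzA y p"
    using pi1_in_SyzA_iff[OF y r(1)] s by simp
qed

lemma piSyz_surj_if_Mid_IF_subset:
  assumes y: "\<forall>q. y q \<in> Fc" and eq: "Mid y \<inter> IF (Suc p) \<subseteq> dK y ` Rge (Suc p)"
  shows "piSyz_surj y p"
  unfolding piSyz_surj_def
proof
  show "pi1 p ` SyzK y p \<subseteq> SyzA y p"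
    using pi1_SyzK_subset_SyzA[OF y] .
  show "SyzA y p \<subseteq> pi1 p ` SyzK y p"
  proof
    fix s assume s: "s \<in> SyzA y p"
    then have s_deg: "s \<in> Rdeg p"
      unfolding SyzA_def by blast
    then have sR: "s \<in> Rge p"
      using Rdeg_subset_Rge by blast
    have pi1_s: "pi1 p s = s"
      using s_deg unfolding Rdeg_def pi1_def by (auto simp: fun_eq_iff)
    have "dK y s \<in> IF (Suc p)"
      using pi1_in_SyzA_iff[OF y sR] s pi1_s by simp
    moreover have "dK y s \<in> Mid y"
      unfolding Mid_def using sR Rge_subset_Rc by blast
    ultimately obtain r where r: "r \<in> Rge (Suc p)" "dK y s = dK y r"
      using eq by blast
    then have rR: "r \<in> Rge p"
      using Rge_Suc_subset by blast
    have "s \<in> Rc" "r \<in> Rc"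
      using sR rR Rge_subset_Rc by blast+
    then have "dK y (s - r) = 0"
      using r(2) by (simp add: dK_diff)
    then have "s - r \<in> SyzK y p"
      unfolding SyzK_def zero_fun_def using diff_in_Rge[OF sR rR] by simp
    moreover have "pi1 p (s - r) = s"
    proof -
      have "pi1 p r = 0"
        using r(1) unfolding Rge_def pi1_def by (auto simp: fun_eq_iff)
      moreover have "pi1 p (s - r) = pi1 p s - pi1 p r"
        unfolding pi1_def by (simp add: fun_eq_iff)
      ultimately show ?thesis
        using pi1_s by simp
    qed
    ultimately show "s \<in> pi1 p ` SyzK y p"
      by (metis image_eqI)
  qed
qed

subsection \<open>The quotient \<open>I\<^sub>F\<^sup>p / \<partial>\<^sub>K(R\<^sub>\<ge>\<^sub>p)\<close>\<close>

lemma coset_eq_iff: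
  fixes S U :: "'a::ab_group_add set"
  assumes S: "\<And>a b. a \<in> S \<Longrightarrow> b \<in> S \<Longrightarrow> a - b \<in> S" "0 \<in> S" and "f \<in> U" "g \<in> U"
  shows "{h \<in> U. h - f \<in> S} = {h \<in> U. h - g \<in> S} \<longleftrightarrow> f - g \<in> S"
proof
  assume "{h \<in> U. h - f \<in> S} = {h \<in> U. h - g \<in> S}"
  then show "f - g \<in> S"
    using assms by (metis (no_types, lifting) diff_self mem_Collect_eq)
next
  assume fg: "f - g \<in> S"
  then have gf: "g - f \<in> S"
    using S by (metis diff_0 minus_diff_eq)
  have "h - f \<in> S \<longleftrightarrow> h - g \<in> S" for h
    using S(1)[of "h - f" "g - f"] S(1)[of "h - g" "f - g"] fg gf by auto
  then show "{h \<in> U. h - f \<in> S} = {h \<in> U. h - g \<in> S}"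
    by blast
qed

lemma bij_betw_image_classes:
  assumes "\<And>f g. f \<in> U \<Longrightarrow> g \<in> U \<Longrightarrow> \<kappa> f = \<kappa> g \<longleftrightarrow> \<mu> f = \<mu> g"
  shows "\<exists>\<phi>. bij_betw \<phi> (\<kappa> ` U) (\<mu> ` U) \<and> (\<forall>f\<in>U. \<phi> (\<kappa> f) = \<mu> f)"
proof -
  define \<phi> where "\<phi> = \<mu> \<circ> inv_into U \<kappa>"
  have \<phi>: "\<phi> (\<kappa> f) = \<mu> f" if "f \<in> U" for f
    using assms[of "inv_into U \<kappa> (\<kappa> f)" f] that
    by (simp add: \<phi>_def f_inv_into_f inv_into_into)
  have "inj_on \<phi> (\<kappa> ` U)"
    by (rule inj_onI) (use \<phi> assms in auto)
  moreover have "\<phi> ` \<kappa> ` U = \<mu> ` U"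
    using \<phi> by (simp add: image_image)
  ultimately show ?thesis
    using \<phi> unfolding bij_betw_def by blast
qed

lemma zero_in_dK_image: "0 \<in> dK y ` Rge p"
  by (rule rev_image_eqI[where f = "dK y", OF zero_in_Rge]) (simp add: dK_zero)

lemma diff_in_dK_image:
  assumes "a \<in> dK y ` Rge p" "b \<in> dK y ` Rge p"
  shows "a - b \<in> dK y ` Rge p"
proof -
  obtain r s where r: "r \<in> Rge p" "a = dK y r" and s: "s \<in> Rge p" "b = dK y s"
    using assms by blast
  have "r \<in> Rc" "s \<in> Rc"
    using r(1) s(1) Rge_subset_Rc by blast+
  then have "a - b = dK y (r - s)"
    using r(2) s(2) by (simp add: dK_diff)
  with diff_in_Rge[OF r(1) s(1)] show ?thesis
    by (rule rev_image_eqI[where f = "dK y"])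
qed

lemma Mid_eq_dK_image_Rge_0: "Mid y = dK y ` Rge 0"
  by (simp add: Mid_def Rge_eq_Rc)

lemma Kcls_eq_iff:
  assumes "f \<in> Fc" "g \<in> Fc"
  shows "Kcls y f = Kcls y g \<longleftrightarrow> f - g \<in> Mid y"
proof -
  have cls: "Kcls y h = {k \<in> Fc. k - h \<in> dK y ` Rge 0}" for h
    unfolding Kcls_def Mid_eq_dK_image_Rge_0 fun_diff_def ..
  show ?thesis
    unfolding cls Mid_eq_dK_image_Rge_0
    by (rule coset_eq_iff[OF diff_in_dK_image zero_in_dK_image assms])
qed

lemma Dcls_eq_iff:
  assumes "f \<in> IF p" "g \<in> IF p"
  shows "Dcls y p f = Dcls y p g \<longleftrightarrow> f - g \<in> dK y ` Rge p"
proof -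
  have cls: "Dcls y p h = {k \<in> IF p. k - h \<in> dK y ` Rge p}" for h
    unfolding Dcls_def fun_diff_def ..
  show ?thesis
    unfolding cls by (rule coset_eq_iff[OF diff_in_dK_image zero_in_dK_image assms])
qed

lemma IFquot_bij_IK:
  fixes y :: "'q \<Rightarrow> 'x ser"
  assumes eq: "dK y ` Rge p = Mid y \<inter> IF p"
  shows "\<exists>\<phi>. bij_betw \<phi> (IFquot y p) (IK y p) \<and> (\<forall>f\<in>IF p. \<phi> (Dcls y p f) = Kcls y f)"
  unfolding IFquot_def IK_def
proof (rule bij_betw_image_classes)
  fix f g :: "'x ser" assume f: "f \<in> IF p" and g: "g \<in> IF p"
  have "Dcls y p f = Dcls y p g \<longleftrightarrow> f - g \<in> Mid y \<inter> IF p"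
    using Dcls_eq_iff[OF f g, where y = y] unfolding eq .
  also have "\<dots> \<longleftrightarrow> f - g \<in> Mid y"
    using diff_in_IF[OF f g] by blast
  also have "\<dots> \<longleftrightarrow> Kcls y f = Kcls y g"
    using Kcls_eq_iff[of f g y] f g unfolding IF_def by simp
  finally show "Dcls y p f = Dcls y p g \<longleftrightarrow> Kcls y f = Kcls y g" .
qed

theorem proposition3p2:
  fixes y :: "'q \<Rightarrow> 'x list \<Rightarrow> rat"
  assumes "\<forall>q. y q \<in> IF 2"
  shows "((\<forall>p\<ge>2. piSyz_surj y p) \<longleftrightarrow> (\<forall>p\<ge>2. dK y ` Rge p = Mid y \<inter> IF p))
    \<and> ((\<forall>p\<ge>2. dK y ` Rge p = Mid y \<inter> IF p) \<longrightarrow>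
       (\<forall>p\<ge>2. \<exists>\<phi>. bij_betw \<phi> (IFquot y p) (IK y p) \<and>
                   (\<forall>f\<in>IF p. \<phi> (Dcls y p f) = Kcls y f)))"
proof -
  have y: "\<forall>q. y q \<in> Fc"
    using assms unfolding IF_def by auto
  have "(\<forall>p\<ge>2. piSyz_surj y p) \<longleftrightarrow> (\<forall>p\<ge>2. dK y ` Rge p = Mid y \<inter> IF p)"
  proof
    assume surj: "\<forall>p\<ge>2. piSyz_surj y p"
    show "\<forall>p\<ge>2. dK y ` Rge p = Mid y \<inter> IF p"
    proof (intro allI impI subset_antisym dK_Rge_subset[OF y] Mid_IF_subset_if_piSyz_surj[OF y])
      show "piSyz_surj y k" if "2 \<le> k" for k
        using surj that by blast
    qed
  next
    assume eq: "\<forall>p\<ge>2. dK y ` Rge p = Mid y \<inter> IF p"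
    show "\<forall>p\<ge>2. piSyz_surj y p"
    proof (intro allI impI piSyz_surj_if_Mid_IF_subset[OF y])
      show "Mid y \<inter> IF (Suc p) \<subseteq> dK y ` Rge (Suc p)" if "2 \<le> p" for p
        using eq that by simp
    qed
  qed
  moreover have "\<forall>p\<ge>2. \<exists>\<phi>. bij_betw \<phi> (IFquot y p) (IK y p) \<and> (\<forall>f\<in>IF p. \<phi> (Dcls y p f) = Kcls y f)"
    if "\<forall>p\<ge>2. dK y ` Rge p = Mid y \<inter> IF p"
    using IFquot_bij_IK that by blast
  ultimately show ?thesis
    by blast
qed

end
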